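(* Let $X$ and $Y$ be random variables on finite alphabets with joint distribution $p(x_i,y_j)$, marginals $p(x_i)$, $p(y_j)$, and conditional probabilities $p(x_i\mid y_j)$ (defined whenever $p(y_j)>0$). For every $0<\varpi\le 2$, $$\Phi_\varpi(X\|Y)=L(\varpi,X)-L(\varpi,X\mid Y)\ \ge 0 .$$
   Context: For a discrete random variable $X$ with distribution $\{p(x_1),\dots,p(x_n)\}$ the message importance measure (MIM) is $L(\varpi,X)=\sum_i p(x_i)e^{\varpi(1-p(x_i))}$. For a pair $(X,Y)$ the conditional message importance measure (CMIM) is $L(\varpi,X\mid Y)=\sum_{j:\,p(y_j)>0} p(y_j)\sum_i p(x_i\mid y_j)e^{\varpi(1-p(x_i\mid y_j))}$. The message importance loss is $\Phi_\varpi(X\|Y)=L(\varpi,X)-L(\varpi,X\mid Y)$. *)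

theory Defs
  imports Complex_Main
begin

definition marg_X :: "('a \<Rightarrow> 'b \<Rightarrow> real) \<Rightarrow> 'b set \<Rightarrow> 'a \<Rightarrow> real" where
  "marg_X pXY B x = (\<Sum>y\<in>B. pXY x y)"

definition marg_Y :: "('a \<Rightarrow> 'b \<Rightarrow> real) \<Rightarrow> 'a set \<Rightarrow> 'b \<Rightarrow> real" where
  "marg_Y pXY A y = (\<Sum>x\<in>A. pXY x y)"

text \<open>conditional probability p(x|y), used only when p(y) > 0\<close>
definition cond_XY :: "('a \<Rightarrow> 'b \<Rightarrow> real) \<Rightarrow> 'a set \<Rightarrow> 'a \<Rightarrow> 'b \<Rightarrow> real" where
  "cond_XY pXY A x y = pXY x y / marg_Y pXY A y"

definition MIM :: "real \<Rightarrow> ('a \<Rightarrow> real) \<Rightarrow> 'a set \<Rightarrow> real" where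
  "MIM w P A = (\<Sum>x\<in>A. P x * exp (w * (1 - P x)))"

definition CMIM :: "real \<Rightarrow> ('a \<Rightarrow> 'b \<Rightarrow> real) \<Rightarrow> 'a set \<Rightarrow> 'b set \<Rightarrow> real" where
  "CMIM w pXY A B =
     (\<Sum>y\<in>{y\<in>B. marg_Y pXY A y > 0}.
        marg_Y pXY A y * (\<Sum>x\<in>A. cond_XY pXY A x y * exp (w * (1 - cond_XY pXY A x y))))"

definition MIL :: "real \<Rightarrow> ('a \<Rightarrow> 'b \<Rightarrow> real) \<Rightarrow> 'a set \<Rightarrow> 'b set \<Rightarrow> real" where
  "MIL w pXY A B = MIM w (marg_X pXY B) A - CMIM w pXY A B"

end

theory Submission
  imports Defs "HOL-Analysis.Analysis"
begin

text \<open>Writing \<open>g p = p e^{\<varpi>(1-p)}\<close>, both measures are sums of \<open>g\<close>: \<open>L(\<varpi>,X) = \<Sum>\<^sub>x g(p(x))\<close> and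
  \<open>L(\<varpi>,X|Y) = \<Sum>\<^sub>x \<Sum>\<^sub>y p(y) g(p(x|y))\<close>. Since \<open>p(x) = \<Sum>\<^sub>y p(y) p(x|y)\<close> is a convex combination
  of the \<open>p(x|y)\<close>, the claim is Jensen's inequality for \<open>g\<close>, which is concave on \<open>[0,1]\<close> because
  \<open>g''(p) = \<varpi> e^{\<varpi>(1-p)} (\<varpi> p - 2) \<le> 0\<close> exactly when \<open>\<varpi> \<le> 2\<close>.\<close>

lemma concave_on_mul_exp_one_minus:
  assumes "0 \<le> w" "w \<le> 2"
  shows "concave_on {0..1} (\<lambda>p::real. p * exp (w * (1 - p)))"
  unfolding concave_on_def
proof (rule f''_ge0_imp_convex[where f' = "\<lambda>p. exp (w * (1 - p)) * (w * p - 1)"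
      and f'' = "\<lambda>p. w * exp (w * (1 - p)) * (2 - w * p)"])
  show "convex {0..1::real}" by simp
  fix x :: real assume x: "x \<in> {0..1}"
  show "((\<lambda>p. - (p * exp (w * (1 - p)))) has_real_derivative exp (w * (1 - x)) * (w * x - 1)) (at x)"
    by (rule derivative_eq_intros refl | simp add: algebra_simps)+
  show "((\<lambda>p. exp (w * (1 - p)) * (w * p - 1)) has_real_derivative w * exp (w * (1 - x)) * (2 - w * x)) (at x)"
    by (rule derivative_eq_intros refl | simp add: algebra_simps)+
  have "w * x \<le> 2" using x assms mult_mono[of w 2 x 1] by simp
  then show "0 \<le> w * exp (w * (1 - x)) * (2 - w * x)" using assms by simp
qed

definition support_Y :: "('a \<Rightarrow> 'b \<Rightarrow> real) \<Rightarrow> 'a set \<Rightarrow> 'b set \<Rightarrow> 'b set" where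
  "support_Y pXY A B = {y\<in>B. 0 < marg_Y pXY A y}"

context
  fixes pXY :: "'a \<Rightarrow> 'b \<Rightarrow> real" and A :: "'a set" and B :: "'b set"
  assumes finite_A: "finite A" and finite_B: "finite B"
    and nonneg: "\<And>x y. x \<in> A \<Longrightarrow> y \<in> B \<Longrightarrow> 0 \<le> pXY x y"
begin

lemma marg_Y_nonneg: "y \<in> B \<Longrightarrow> 0 \<le> marg_Y pXY A y"
  unfolding marg_Y_def by (simp add: nonneg sum_nonneg)

lemma joint_eq_0_outside_support_Y:
  assumes "x \<in> A" "y \<in> B" "y \<notin> support_Y pXY A B"
  shows "pXY x y = 0"
proof -
  have "marg_Y pXY A y = 0"
    using assms(2,3) marg_Y_nonneg[of y] by (simp add: support_Y_def)
  then have "\<forall>x\<in>A. pXY x y = 0"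
    unfolding marg_Y_def using sum_nonneg_eq_0_iff[OF finite_A, of "\<lambda>x. pXY x y"] nonneg assms(2)
    by simp
  then show ?thesis using assms(1) by blast
qed

lemma sum_marg_Y_support_Y:
  assumes "(\<Sum>x\<in>A. \<Sum>y\<in>B. pXY x y) = 1"
  shows "(\<Sum>y\<in>support_Y pXY A B. marg_Y pXY A y) = 1"
proof -
  have "(\<Sum>y\<in>support_Y pXY A B. marg_Y pXY A y) = (\<Sum>y\<in>B. marg_Y pXY A y)"
    by (rule sum.mono_neutral_left[OF finite_B])
       (auto simp: support_Y_def dest: marg_Y_nonneg)
  also have "\<dots> = 1"
    using assms sum.swap unfolding marg_Y_def by metis
  finally show ?thesis .
qed

lemma cond_XY_mem_unit_interval:
  assumes "x \<in> A" "y \<in> support_Y pXY A B"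
  shows "cond_XY pXY A x y \<in> {0..1}"
proof -
  have "pXY x y \<le> marg_Y pXY A y"
    unfolding marg_Y_def
    using assms(2) by (intro member_le_sum[OF assms(1) _ finite_A]) (simp add: nonneg support_Y_def)
  then show ?thesis
    using assms nonneg[of x y] by (auto simp: cond_XY_def support_Y_def)
qed

lemma marg_X_eq_mixture_cond_XY:
  assumes "x \<in> A"
  shows "marg_X pXY B x =
    (\<Sum>y\<in>support_Y pXY A B. marg_Y pXY A y * cond_XY pXY A x y)"
proof -
  have "marg_X pXY B x = (\<Sum>y\<in>support_Y pXY A B. pXY x y)"
    unfolding marg_X_def
    by (rule sum.mono_neutral_right[OF finite_B])
       (auto simp: support_Y_def joint_eq_0_outside_support_Y assms)
  also have "\<dots> = (\<Sum>y\<in>support_Y pXY A B. marg_Y pXY A y * cond_XY pXY A x y)"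
    by (rule sum.cong) (auto simp: support_Y_def cond_XY_def)
  finally show ?thesis .
qed

end

lemma CMIM_eq_sum_support_Y:
  "CMIM w pXY A B = (\<Sum>x\<in>A. \<Sum>y\<in>support_Y pXY A B.
      marg_Y pXY A y * (cond_XY pXY A x y * exp (w * (1 - cond_XY pXY A x y))))"
  unfolding CMIM_def support_Y_def sum_distrib_left by (rule sum.swap)

theorem mainTheorem1:
  fixes pXY :: "'a \<Rightarrow> 'b \<Rightarrow> real" and A :: "'a set" and B :: "'b set" and w :: real
  assumes "finite A" and "finite B"
    and "\<And>x y. x \<in> A \<Longrightarrow> y \<in> B \<Longrightarrow> pXY x y \<ge> 0"
    and "(\<Sum>x\<in>A. \<Sum>y\<in>B. pXY x y) = 1"
    and "0 < w" and "w \<le> 2"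
  shows "MIL w pXY A B \<ge> 0"
proof -
  let ?S = "support_Y pXY A B" and ?g = "\<lambda>p::real. p * exp (w * (1 - p))"
  have sum_S: "(\<Sum>y\<in>?S. marg_Y pXY A y) = 1"
    using sum_marg_Y_support_Y[OF assms(1-4)] .
  have jensen: "(\<Sum>y\<in>?S. marg_Y pXY A y * ?g (cond_XY pXY A x y))
      \<le> ?g (\<Sum>y\<in>?S. marg_Y pXY A y * cond_XY pXY A x y)" if "x \<in> A" for x
  proof -
    have "finite ?S" using assms(2) by (simp add: support_Y_def)
    moreover have "?S \<noteq> {}" using sum_S by auto
    moreover have "concave_on {0..1} ?g"
      using concave_on_mul_exp_one_minus assms(5,6) by simp
    ultimately show ?thesis
      using concave_on_sum[of ?S "{0..1}" ?g "marg_Y pXY A" "cond_XY pXY A x"] sum_S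
        cond_XY_mem_unit_interval[OF assms(1-3) that] marg_Y_nonneg[OF assms(1-3)]
      by (simp add: support_Y_def)
  qed
  have "CMIM w pXY A B = (\<Sum>x\<in>A. \<Sum>y\<in>?S. marg_Y pXY A y * ?g (cond_XY pXY A x y))"
    by (rule CMIM_eq_sum_support_Y)
  also have "\<dots> \<le> (\<Sum>x\<in>A. ?g (\<Sum>y\<in>?S. marg_Y pXY A y * cond_XY pXY A x y))"
    by (rule sum_mono) (rule jensen)
  also have "\<dots> = MIM w (marg_X pXY B) A"
    unfolding MIM_def by (rule sum.cong) (simp_all add: marg_X_eq_mixture_cond_XY[OF assms(1-3)])
  finally show ?thesis by (simp add: MIL_def)
qed

end
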